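(* Let $p\ge3$ and let $H$ be a graph with vertex set $A\cup B\cup\{v\}$ such that $A$, $B$, $\{v\}$ are pairwise disjoint; $A$ and $B$ are independent sets complete to each other; $|A|\ge p$ and $|B|\ge p$; $v$ has at least two neighbours in $A\cup B$; and $v$ has a neighbour and a non-neighbour in at least one of the sets $A$, $B$. Then $H\xrightarrow{\cap} X_p$ or $H\xrightarrow{\cap} Y_p$. In particular, if $p\ge 3t^2+t+1$ for some $t\in\mathbb{N}$, then $H\xrightarrow{\cap} tS_{t,t,t}$.
   Context: All graphs are finite and simple. For graphs $G_1=(V_1,E_1)$, $G_2=(V_2,E_2)$, $G_1\cap G_2=(V_1\cap V_2, E_1\cap E_2)$. For a graph $G=(V,E)$ and an injective map $\alpha$ on $V$, $G^{\alpha}$ has vertex set $\alpha(V)$ and edge set $\{\{\alpha(v),\alpha(w)\}: \{v,w\}\in E\}$. We write $G\xrightarrow{\cap} H$ if $H$ is (isomorphic to) $G^{\alpha_1}\cap\cdots\cap G^{\alpha_k}$ for some $k\ge1$ and injective maps $\alpha_1,\dots,\alpha_k$ on $V(G)$. For integers $a,b,c\ge1$, $S_{a,b,c}$ is the tree consisting of a vertex of degree $3$ together with three pendant paths having $a$, $b$, $c$ edges respectively; $tS_{t,t,t}$ is the disjoint union of $t$ copies of $S_{t,t,t}$. $X_p$ is the graph obtained from $K_{p,p}$ by adding a new vertex adjacent to exactly two vertices, both in the same part; $Y_p$ is obtained from $K_{p,p}$ by adding a new vertex adjacent to exactly two vertices, one in each part. *)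

theory Defs
  imports Main
begin

type_synonym 'a graph = "'a set \<times> 'a set set"

definition simple_graph :: "'a graph \<Rightarrow> bool" where
  "simple_graph G \<longleftrightarrow> finite (fst G) \<and>
     (\<forall>e\<in>snd G. \<exists>x y. x \<in> fst G \<and> y \<in> fst G \<and> x \<noteq> y \<and> e = {x, y})"

definition graph_iso :: "'a graph \<Rightarrow> 'b graph \<Rightarrow> bool" where
  "graph_iso G H \<longleftrightarrow> (\<exists>f. bij_betw f (fst G) (fst H) \<and>
     (\<forall>x\<in>fst G. \<forall>y\<in>fst G. {x, y} \<in> snd G \<longleftrightarrow> {f x, f y} \<in> snd H))"

definition graph_image :: "('a \<Rightarrow> 'b) \<Rightarrow> 'a graph \<Rightarrow> 'b graph" where
  "graph_image \<alpha> G = (\<alpha> ` fst G, (\<lambda>e. \<alpha> ` e) ` snd G)"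

text \<open>The maps take values in nat; for finite graphs this loses no generality (any finitely many
  injective maps into a common set can be renamed into nat).\<close>
definition intersects_to :: "'a graph \<Rightarrow> 'b graph \<Rightarrow> bool" where
  "intersects_to G H \<longleftrightarrow> (\<exists>k::nat. \<exists>\<alpha> :: nat \<Rightarrow> 'a \<Rightarrow> nat. k \<ge> 1 \<and>
     (\<forall>i<k. inj_on (\<alpha> i) (fst G)) \<and>
     graph_iso ((\<Inter>i<k. fst (graph_image (\<alpha> i) G)), (\<Inter>i<k. snd (graph_image (\<alpha> i) G))) H)"

text \<open>X_p: K_{p,p} with parts {0..<p}, {p..<2p}; new vertex 2p adjacent to 0 and 1 (same part).\<close>
definition Kpp_edges :: "nat \<Rightarrow> nat set set" where
  "Kpp_edges p = {{a, b} | a b. a < p \<and> p \<le> b \<and> b < 2 * p}"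

definition X_graph :: "nat \<Rightarrow> nat graph" where
  "X_graph p = ({0..2 * p}, Kpp_edges p \<union> {{2 * p, 0}, {2 * p, 1}})"

text \<open>Y_p: new vertex 2p adjacent to 0 and p (one in each part).\<close>
definition Y_graph :: "nat \<Rightarrow> nat graph" where
  "Y_graph p = ({0..2 * p}, Kpp_edges p \<union> {{2 * p, 0}, {2 * p, p}})"

text \<open>t S_{t,t,t}: copies i < t; centre (i,0,0); leg j in {1,2,3} has vertices (i,j,k), 1 <= k <= t,
  path centre - (i,j,1) - ... - (i,j,t).\<close>
definition tS_graph :: "nat \<Rightarrow> (nat \<times> nat \<times> nat) graph" where
  "tS_graph t =
    ({(i, 0, 0) | i. i < t} \<union> {(i, j, k) | i j k. i < t \<and> 1 \<le> j \<and> j \<le> 3 \<and> 1 \<le> k \<and> k \<le> t},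
     {{(i, 0, 0), (i, j, 1)} | i j. i < t \<and> 1 \<le> j \<and> j \<le> 3} \<union>
     {{(i, j, k), (i, j, Suc k)} | i j k. i < t \<and> 1 \<le> j \<and> j \<le> 3 \<and> 1 \<le> k \<and> k < t})"

end

theory Submission
  imports Defs
begin

(* To prove G -->cap H it suffices to embed H into G (as a subgraph, not necessarily induced)
   in finitely many ways such that every non-edge of H is sent to a non-edge of G by at least
   one of the embeddings: the intersection of the images is then a copy of H.

   Here G is the biclique K_{S,S'} plus an apex v which has a neighbour u1 and a non-neighbour
   u0 in S and a second neighbour u2. The embeddings used send a vertex x of H with at most two
   neighbours n1, n2 to v and n1, n2 to u1, u2, and map the rest of H into S and S' along a
   proper 2-colouring. Such an embedding sends every non-edge inside a colour class to a
   non-edge, and it sends the non-edge {x, y} to the non-edge {v, u0} if y is mapped to u0,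
   which needs y to have the colour of n1. For X_p and Y_p, x is the added vertex and the
   colouring is the bipartition of K_{p,p}, possibly swapped. In tS_{t,t,t}, pairs whose depths
   have equal parity are separated by the parity colouring alone; every other non-adjacent pair
   contains a vertex x on a leg, and as x separates its two neighbours, the parity colouring may
   be flipped on one side of x to put n2 on the side of u2. *)

section \<open>Separating non-edges by embeddings\<close>

definition graph_embedding :: "'b graph \<Rightarrow> 'a graph \<Rightarrow> ('b \<Rightarrow> 'a) \<Rightarrow> bool" where
  "graph_embedding H G \<phi> \<longleftrightarrow>
     inj_on \<phi> (fst H) \<and> \<phi> ` fst H \<subseteq> fst G \<and> (\<forall>e\<in>snd H. \<phi> ` e \<in> snd G)"

lemma simple_graph_edge_subset: "simple_graph G \<Longrightarrow> e \<in> snd G \<Longrightarrow> e \<subseteq> fst G"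
  unfolding simple_graph_def by fastforce

lemma graph_iso_graph_image:
  assumes "simple_graph H" "inj_on g (fst H)"
  shows "graph_iso (graph_image g H) H"
  unfolding graph_iso_def
proof (intro exI conjI ballI)
  let ?f = "the_inv_into (fst H) g"
  show "bij_betw ?f (fst (graph_image g H)) (fst H)"
    using bij_betw_the_inv_into[OF inj_on_imp_bij_betw[OF assms(2)]] by (simp add: graph_image_def)
  fix x y assume "x \<in> fst (graph_image g H)" "y \<in> fst (graph_image g H)"
  then obtain a b where ab: "a \<in> fst H" "b \<in> fst H" "x = g a" "y = g b"
    by (auto simp: graph_image_def)
  have "g ` e = g ` {a, b} \<longleftrightarrow> e = {a, b}" if "e \<in> snd H" for e
    using inj_on_image_eq_iff[OF assms(2) simple_graph_edge_subset[OF assms(1) that], of "{a, b}"] ab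
    by simp
  then have "{x, y} \<in> snd (graph_image g H) \<longleftrightarrow> {a, b} \<in> snd H"
    using ab by (auto simp: graph_image_def)
  then show "{x, y} \<in> snd (graph_image g H) \<longleftrightarrow> {?f x, ?f y} \<in> snd H"
    using ab the_inv_into_f_f[OF assms(2)] by simp
qed

lemma intersects_to_if_intersection_is_image:
  fixes \<alpha> :: "nat \<Rightarrow> 'a \<Rightarrow> 'c" and g :: "'b \<Rightarrow> 'c"
  assumes G: "simple_graph G" and H: "simple_graph H"
    and "k \<ge> 1" and inj: "\<forall>i<k. inj_on (\<alpha> i) (fst G)" and "inj_on g (fst H)"
    and vertices: "(\<Inter>i<k. fst (graph_image (\<alpha> i) G)) = g ` fst H"
    and edges: "(\<Inter>i<k. snd (graph_image (\<alpha> i) G)) = image g ` snd H"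
  shows "intersects_to G H"
proof -
  define U where "U = (\<Union>i<k. \<alpha> i ` fst G)"
  have "finite U"
    using G unfolding U_def simple_graph_def by simp
  then obtain h :: "'c \<Rightarrow> nat" where h: "inj_on h U"
    using finite_imp_inj_to_nat_seg by blast
  have gU: "g ` fst H \<subseteq> U"
    using vertices \<open>k \<ge> 1\<close> unfolding U_def graph_image_def by force
  have edges_U: "image (\<alpha> i) e \<in> Pow U" if "i < k" "e \<in> snd G" for i e
    using simple_graph_edge_subset[OF G that(2)] that(1) unfolding U_def by blast
  have "(\<Inter>i<k. fst (graph_image (h \<circ> \<alpha> i) G)) = h ` (\<Inter>i<k. fst (graph_image (\<alpha> i) G))"
    using image_INT[OF h, of "{..<k}" "\<lambda>i. \<alpha> i ` fst G" 0] \<open>k \<ge> 1\<close>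
    by (auto simp: graph_image_def U_def image_comp)
  also have "\<dots> = (h \<circ> g) ` fst H"
    by (simp add: vertices image_comp)
  finally have V: "(\<Inter>i<k. fst (graph_image (h \<circ> \<alpha> i) G)) = fst (graph_image (h \<circ> g) H)"
    by (simp add: graph_image_def)
  have "image h ` (\<Inter>i<k. image (\<alpha> i) ` snd G) = (\<Inter>i<k. image h ` image (\<alpha> i) ` snd G)"
    by (rule image_INT[OF inj_on_image_Pow[OF h], where j = 0]) (use edges_U \<open>k \<ge> 1\<close> in auto)
  then have "(\<Inter>i<k. snd (graph_image (h \<circ> \<alpha> i) G))
      = image h ` (\<Inter>i<k. snd (graph_image (\<alpha> i) G))"
    by (simp add: graph_image_def image_image image_comp)
  also have "\<dots> = image (h \<circ> g) ` snd H"
    by (simp add: edges image_comp)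
  finally have E: "(\<Inter>i<k. snd (graph_image (h \<circ> \<alpha> i) G)) = snd (graph_image (h \<circ> g) H)"
    by (simp add: graph_image_def)
  have "inj_on (h \<circ> g) (fst H)"
    using comp_inj_on[OF \<open>inj_on g (fst H)\<close> inj_on_subset[OF h gU]] .
  then have "graph_iso (graph_image (h \<circ> g) H) H"
    using graph_iso_graph_image[OF H] by blast
  moreover have "inj_on (h \<circ> \<alpha> i) (fst G)" if "i < k" for i
    using inj that by (intro comp_inj_on inj_on_subset[OF h]) (auto simp: U_def)
  ultimately show ?thesis
    unfolding intersects_to_def using \<open>k \<ge> 1\<close> V E
    by (intro exI[of _ k] exI[of _ "\<lambda>i. h \<circ> \<alpha> i"]) (simp add: prod_eq_iff)
qed

definition tag_copy :: "'b set \<Rightarrow> ('b \<Rightarrow> 'a) \<Rightarrow> nat \<Rightarrow> 'a \<Rightarrow> 'b + nat \<times> 'a" where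
  "tag_copy W \<phi> i u = (if u \<in> \<phi> ` W then Inl (the_inv_into W \<phi> u) else Inr (i, u))"

lemma tag_copy_apply: "inj_on \<phi> W \<Longrightarrow> w \<in> W \<Longrightarrow> tag_copy W \<phi> i (\<phi> w) = Inl w"
  by (simp add: tag_copy_def the_inv_into_f_f)

lemma inj_tag_copy: "inj_on \<phi> W \<Longrightarrow> inj (tag_copy W \<phi> i)"
  unfolding tag_copy_def inj_def by (auto simp: f_the_inv_into_f the_inv_into_f_f)

lemma Inter_tag_copy_vertices:
  fixes \<Psi> :: "nat \<Rightarrow> 'b \<Rightarrow> 'a"
  assumes "1 < n" "\<And>i. inj_on (\<Psi> i) W" "\<And>i. \<Psi> i ` W \<subseteq> V"
  shows "(\<Inter>i<n. tag_copy W (\<Psi> i) i ` V) = Inl ` W"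
proof (intro equalityI subsetI)
  fix z assume "z \<in> (\<Inter>i<n. tag_copy W (\<Psi> i) i ` V)"
  then have "z \<in> tag_copy W (\<Psi> 0) 0 ` V" "z \<in> tag_copy W (\<Psi> 1) 1 ` V"
    using assms(1) by auto
  then show "z \<in> Inl ` W"
    unfolding tag_copy_def by (auto intro: the_inv_into_into[OF assms(2)])
next
  fix z :: "'b + nat \<times> 'a" assume "z \<in> Inl ` W"
  then obtain w where "w \<in> W" "z = Inl w"
    by blast
  then have "z \<in> tag_copy W (\<Psi> i) i ` V" for i
    using tag_copy_apply[OF assms(2)] assms(3) by (metis image_eqI image_subset_iff)
  then show "z \<in> (\<Inter>i<n. tag_copy W (\<Psi> i) i ` V)"
    by blast
qed

lemma Inter_tag_copy_edge:
  assumes G: "simple_graph G" and "1 < n"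
    and \<Psi>: "\<And>i. inj_on (\<Psi> i) W" "\<And>i. \<Psi> i ` W \<subseteq> fst G"
    and \<epsilon>: "\<forall>i<n. \<epsilon> \<in> image (tag_copy W (\<Psi> i) i) ` snd G"
  shows "\<exists>a\<in>W. \<exists>b\<in>W. a \<noteq> b \<and> \<epsilon> = {Inl a, Inl b} \<and> (\<forall>i<n. {\<Psi> i a, \<Psi> i b} \<in> snd G)"
proof -
  let ?\<alpha> = "\<lambda>i. tag_copy W (\<Psi> i) i"
  have "\<epsilon> \<subseteq> ?\<alpha> i ` fst G" if i: "i < n" for i
  proof -
    obtain e where "e \<in> snd G" "\<epsilon> = ?\<alpha> i ` e"
      using \<epsilon> i by blast
    then show ?thesis
      using simple_graph_edge_subset[OF G] by blast
  qed
  then have "\<epsilon> \<subseteq> (\<Inter>i<n. ?\<alpha> i ` fst G)"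
    by blast
  then have "\<epsilon> \<subseteq> Inl ` W"
    unfolding Inter_tag_copy_vertices[OF \<open>1 < n\<close> \<Psi>(1) \<Psi>(2)] .
  moreover obtain x y where xy: "x \<noteq> y" "\<epsilon> = {?\<alpha> 0 x, ?\<alpha> 0 y}"
  proof -
    obtain e where "e \<in> snd G" "\<epsilon> = ?\<alpha> 0 ` e"
      using \<epsilon> \<open>1 < n\<close> by auto
    then show ?thesis
      using that G unfolding simple_graph_def by auto
  qed
  ultimately obtain a b where "a \<in> W" "b \<in> W" "?\<alpha> 0 x = Inl a" "?\<alpha> 0 y = Inl b"
    by blast
  moreover have "?\<alpha> 0 x \<noteq> ?\<alpha> 0 y"
    using inj_tag_copy[OF \<Psi>(1)] xy(1) by (auto dest: injD)
  ultimately have ab: "a \<in> W" "b \<in> W" "a \<noteq> b" "\<epsilon> = {Inl a, Inl b}"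
    using xy(2) by auto
  have "{\<Psi> i a, \<Psi> i b} \<in> snd G" if "i < n" for i
  proof -
    obtain e where e: "e \<in> snd G" "\<epsilon> = ?\<alpha> i ` e"
      using \<epsilon> \<open>i < n\<close> by auto
    then have "?\<alpha> i ` e = ?\<alpha> i ` {\<Psi> i a, \<Psi> i b}"
      using ab tag_copy_apply[OF \<Psi>(1)] by simp
    then have "e = {\<Psi> i a, \<Psi> i b}"
      unfolding inj_image_eq_iff[OF inj_tag_copy[OF \<Psi>(1)]] .
    then show ?thesis
      using e(1) by simp
  qed
  with ab show ?thesis
    by blast
qed

lemma intersects_to_if_embeddings_detect_edges:
  fixes \<Phi> :: "nat \<Rightarrow> 'b \<Rightarrow> 'a"
  assumes G: "simple_graph G" and H: "simple_graph H" and "k \<ge> 1"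
    and emb: "\<forall>i<k. graph_embedding H G (\<Phi> i)"
    and detect: "\<And>x y. x \<in> fst H \<Longrightarrow> y \<in> fst H \<Longrightarrow> x \<noteq> y \<Longrightarrow>
                   (\<forall>i<k. {\<Phi> i x, \<Phi> i y} \<in> snd G) \<Longrightarrow> {x, y} \<in> snd H"
  shows "intersects_to G H"
proof -
  (* Index k repeats the first embedding, so that at least two relabellings are intersected. *)
  define \<Psi> where "\<Psi> i = \<Phi> (if i < k then i else 0)" for i
  define \<alpha> where "\<alpha> i = tag_copy (fst H) (\<Psi> i) i" for i
  have \<Psi>: "inj_on (\<Psi> i) (fst H)" "\<Psi> i ` fst H \<subseteq> fst G" "\<And>e. e \<in> snd H \<Longrightarrow> \<Psi> i ` e \<in> snd G" for i
    using emb \<open>k \<ge> 1\<close> unfolding \<Psi>_def graph_embedding_def by auto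
  have "(\<Inter>i<k+1. fst (graph_image (\<alpha> i) G)) = Inl ` fst H"
    using Inter_tag_copy_vertices[of "k + 1" \<Psi>] \<Psi>(1,2) \<open>k \<ge> 1\<close>
    by (simp add: graph_image_def \<alpha>_def)
  moreover have "(\<Inter>i<k+1. snd (graph_image (\<alpha> i) G)) = image Inl ` snd H"
  proof (intro equalityI subsetI)
    fix \<epsilon> assume "\<epsilon> \<in> (\<Inter>i<k+1. snd (graph_image (\<alpha> i) G))"
    then have "\<forall>i<k+1. \<epsilon> \<in> image (tag_copy (fst H) (\<Psi> i) i) ` snd G"
      by (simp add: graph_image_def \<alpha>_def)
    then have "\<exists>a\<in>fst H. \<exists>b\<in>fst H. a \<noteq> b \<and> \<epsilon> = {Inl a, Inl b} \<and> (\<forall>i<k+1. {\<Psi> i a, \<Psi> i b} \<in> snd G)"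
      using Inter_tag_copy_edge[OF G _ \<Psi>(1,2)] \<open>k \<ge> 1\<close> by simp
    then obtain a b where ab: "a \<in> fst H" "b \<in> fst H" "a \<noteq> b" "\<epsilon> = {Inl a, Inl b}"
      and common: "\<forall>i<k+1. {\<Psi> i a, \<Psi> i b} \<in> snd G"
      by blast
    have "\<forall>i<k. {\<Phi> i a, \<Phi> i b} \<in> snd G"
    proof (intro allI impI)
      fix i assume "i < k"
      then show "{\<Phi> i a, \<Phi> i b} \<in> snd G"
        using common[rule_format, of i] by (simp add: \<Psi>_def)
    qed
    then show "\<epsilon> \<in> image Inl ` snd H"
      using detect[OF ab(1-3)] ab(4) by (auto intro!: image_eqI[of _ _ "{a, b}"])
  next
    fix \<epsilon> :: "('b + nat \<times> 'a) set" assume "\<epsilon> \<in> image Inl ` snd H"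
    then obtain f where f: "f \<in> snd H" "\<epsilon> = Inl ` f"
      by auto
    have "\<epsilon> = \<alpha> i ` \<Psi> i ` f" for i
      unfolding f(2) image_image \<alpha>_def
      using tag_copy_apply[OF \<Psi>(1)] simple_graph_edge_subset[OF H f(1)] by (intro image_cong) auto
    then have "\<epsilon> \<in> image (\<alpha> i) ` snd G" for i
      using \<Psi>(3)[OF f(1)] by blast
    then show "\<epsilon> \<in> (\<Inter>i<k+1. snd (graph_image (\<alpha> i) G))"
      by (simp add: graph_image_def)
  qed
  moreover have "inj_on (\<alpha> i) (fst G)" for i
    unfolding \<alpha>_def using inj_tag_copy[OF \<Psi>(1)] by (rule inj_on_subset) simp
  ultimately show ?thesis
    using intersects_to_if_intersection_is_image[OF G H, of "k + 1" \<alpha> Inl]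
      inj_on_subset[OF inj_Inl subset_UNIV] by simp
qed

lemma intersects_to_if_nonedges_separated:
  assumes G: "simple_graph G" and H: "simple_graph H"
    and embeds: "\<exists>\<phi>. graph_embedding H G \<phi>"
    and separate: "\<And>x y. x \<in> fst H \<Longrightarrow> y \<in> fst H \<Longrightarrow> x \<noteq> y \<Longrightarrow> {x, y} \<notin> snd H \<Longrightarrow>
                     \<exists>\<phi>. graph_embedding H G \<phi> \<and> {\<phi> x, \<phi> y} \<notin> snd G"
  shows "intersects_to G H"
proof -
  define P where "P = {(x, y). x \<in> fst H \<and> y \<in> fst H \<and> x \<noteq> y \<and> {x, y} \<notin> snd H}"
  have "finite P"
    using H unfolding simple_graph_def P_def
    by (auto intro: finite_subset[of _ "fst H \<times> fst H"])
  then obtain ps where ps: "set ps = P"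
    using finite_list by blast
  define sep where "sep = (\<lambda>(x, y). SOME \<phi>. graph_embedding H G \<phi> \<and> {\<phi> x, \<phi> y} \<notin> snd G)"
  have sep: "graph_embedding H G (sep (x, y)) \<and> {sep (x, y) x, sep (x, y) y} \<notin> snd G"
    if "(x, y) \<in> P" for x y
    using someI_ex[OF separate] that unfolding P_def sep_def by auto
  obtain \<phi>\<^sub>0 where \<phi>\<^sub>0: "graph_embedding H G \<phi>\<^sub>0"
    using embeds by blast
  define \<Phi> where "\<Phi> i = (if i < length ps then sep (ps ! i) else \<phi>\<^sub>0)" for i
  have "graph_embedding H G (\<Phi> i)" for i
  proof (cases "i < length ps")
    case True
    then have "ps ! i \<in> P"
      using ps nth_mem by blast
    then show ?thesis
      using sep True unfolding \<Phi>_def by (cases "ps ! i") simp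
  qed (simp add: \<Phi>_def \<phi>\<^sub>0)
  moreover have "{x, y} \<in> snd H"
    if "x \<in> fst H" "y \<in> fst H" "x \<noteq> y" and edge: "\<forall>i<length ps + 1. {\<Phi> i x, \<Phi> i y} \<in> snd G"
    for x y
  proof (rule ccontr)
    assume "{x, y} \<notin> snd H"
    then have "(x, y) \<in> set ps"
      using that ps unfolding P_def by simp
    then obtain i where i: "i < length ps" "ps ! i = (x, y)"
      by (auto simp: in_set_conv_nth)
    then have "{\<Phi> i x, \<Phi> i y} \<notin> snd G"
      using sep[of x y] \<open>(x, y) \<in> set ps\<close> ps unfolding \<Phi>_def by simp
    then show False
      using edge i(1) by simp
  qed
  ultimately show ?thesis
    using intersects_to_if_embeddings_detect_edges[OF G H, of "length ps + 1" \<Phi>] by simp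
qed

section \<open>Embeddings into a biclique with an apex\<close>

lemma inj_on_extend_into:
  assumes "finite T" "finite S" "card T \<le> card S" "D \<subseteq> T" "inj_on f D" "f ` D \<subseteq> S"
  shows "\<exists>g. inj_on g T \<and> g ` T \<subseteq> S \<and> (\<forall>x\<in>D. g x = f x)"
proof -
  have "finite D"
    using assms(1,4) finite_subset by blast
  then have "card (T - D) \<le> card (S - f ` D)"
    using assms by (simp add: card_Diff_subset card_image)
  then obtain h where h: "h ` (T - D) \<subseteq> S - f ` D" "inj_on h (T - D)"
    using card_le_inj[of "T - D" "S - f ` D"] assms(1,2) by auto
  have "inj_on (\<lambda>x. if x \<in> D then f x else h x) (D \<union> (T - D))"
    using h by (intro inj_on_disjoint_Un assms(5)) auto
  moreover have "D \<union> (T - D) = T"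
    using assms(4) by blast
  ultimately show ?thesis
    using h assms(6) by (intro exI[of _ "\<lambda>x. if x \<in> D then f x else h x"]) auto
qed

lemma inj_on_into_two_sides:
  fixes \<sigma> :: "'b \<Rightarrow> bool"
  assumes "finite W" "finite S" "finite S'" "S \<inter> S' = {}"
    and "card {w\<in>W. \<sigma> w} \<le> card S" "card {w\<in>W. \<not> \<sigma> w} \<le> card S'"
    and "D \<subseteq> W" "inj_on f D" "\<forall>w\<in>D. f w \<in> (if \<sigma> w then S else S')"
  shows "\<exists>\<phi>. inj_on \<phi> W \<and> (\<forall>w\<in>W. \<phi> w \<in> (if \<sigma> w then S else S')) \<and> (\<forall>w\<in>D. \<phi> w = f w)"
proof -
  have inj: "inj_on f {w\<in>D. \<sigma> w}" "inj_on f {w\<in>D. \<not> \<sigma> w}"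
    using assms(8) by (auto intro: inj_on_subset)
  have into: "f ` {w\<in>D. \<sigma> w} \<subseteq> S" "f ` {w\<in>D. \<not> \<sigma> w} \<subseteq> S'"
    using assms(9) by auto
  have sub: "{w\<in>D. \<sigma> w} \<subseteq> {w\<in>W. \<sigma> w}" "{w\<in>D. \<not> \<sigma> w} \<subseteq> {w\<in>W. \<not> \<sigma> w}"
    using assms(7) by auto
  have fin: "finite {w\<in>W. \<sigma> w}" "finite {w\<in>W. \<not> \<sigma> w}"
    using assms(1) by auto
  obtain g\<^sub>1 where g\<^sub>1: "inj_on g\<^sub>1 {w\<in>W. \<sigma> w}" "g\<^sub>1 ` {w\<in>W. \<sigma> w} \<subseteq> S"
      "\<forall>w\<in>{w\<in>D. \<sigma> w}. g\<^sub>1 w = f w"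
    using inj_on_extend_into[OF fin(1) assms(2,5) sub(1) inj(1) into(1)] by blast
  obtain g\<^sub>2 where g\<^sub>2: "inj_on g\<^sub>2 {w\<in>W. \<not> \<sigma> w}" "g\<^sub>2 ` {w\<in>W. \<not> \<sigma> w} \<subseteq> S'"
      "\<forall>w\<in>{w\<in>D. \<not> \<sigma> w}. g\<^sub>2 w = f w"
    using inj_on_extend_into[OF fin(2) assms(3,6) sub(2) inj(2) into(2)] by blast
  have "inj_on (\<lambda>w. if w \<in> {w\<in>W. \<sigma> w} then g\<^sub>1 w else g\<^sub>2 w) ({w\<in>W. \<sigma> w} \<union> {w\<in>W. \<not> \<sigma> w})"
    using g\<^sub>1(1,2) g\<^sub>2(1,2) assms(4) by (intro inj_on_disjoint_Un) auto
  moreover have "{w\<in>W. \<sigma> w} \<union> {w\<in>W. \<not> \<sigma> w} = W"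
    by blast
  ultimately show ?thesis
    using g\<^sub>1(2,3) g\<^sub>2(2,3) assms(7)
    by (intro exI[of _ "\<lambda>w. if w \<in> {w\<in>W. \<sigma> w} then g\<^sub>1 w else g\<^sub>2 w"]) auto
qed

locale biclique_with_apex =
  fixes V :: "'a set" and E :: "'a set set" and S S' :: "'a set" and v u\<^sub>0 u\<^sub>1 :: 'a
  assumes simple: "simple_graph (V, E)"
    and V_eq: "V = S \<union> S' \<union> {v}"
    and disjoint: "S \<inter> S' = {}" and apex_notin: "v \<notin> S" "v \<notin> S'"
    and independent: "\<forall>x\<in>S. \<forall>y\<in>S. {x, y} \<notin> E" "\<forall>x\<in>S'. \<forall>y\<in>S'. {x, y} \<notin> E"
    and complete: "\<forall>x\<in>S. \<forall>y\<in>S'. {x, y} \<in> E"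
    and neighbour: "u\<^sub>1 \<in> S" "{v, u\<^sub>1} \<in> E"
    and non_neighbour: "u\<^sub>0 \<in> S" "{v, u\<^sub>0} \<notin> E"
begin

definition side :: "bool \<Rightarrow> 'a set" where
  "side c = (if c then S else S')"

lemma finite_sides: "finite S" "finite S'"
  using simple V_eq unfolding simple_graph_def by auto

lemma apex_notin_side: "v \<notin> side c"
  using apex_notin by (simp add: side_def)

lemma side_subset: "side c \<subseteq> V"
  using V_eq by (auto simp: side_def)

lemma edge_iff_sides_differ: "x \<in> side c \<Longrightarrow> y \<in> side d \<Longrightarrow> {x, y} \<in> E \<longleftrightarrow> c \<noteq> d"
  using independent complete disjoint unfolding side_def
  by (cases c; cases d) (auto, metis insert_commute)

lemma neighbour_of_apex_in_sides: "{v, x} \<in> E \<Longrightarrow> x \<in> S \<union> S'"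
  using simple V_eq unfolding simple_graph_def by (fastforce simp: doubleton_eq_iff)

lemma bipartite_embedding:
  fixes \<sigma> :: "'b \<Rightarrow> bool"
  assumes H: "simple_graph (W, F)"
    and classes: "card {w\<in>W. \<sigma> w} \<le> card S" "card {w\<in>W. \<not> \<sigma> w} \<le> card S'"
    and proper: "\<And>a b. {a, b} \<in> F \<Longrightarrow> \<sigma> a \<noteq> \<sigma> b"
  shows "\<exists>\<phi>. graph_embedding (W, F) (V, E) \<phi> \<and> (\<forall>w\<in>W. \<phi> w \<in> side (\<sigma> w))"
proof -
  obtain \<phi> where \<phi>: "inj_on \<phi> W" "\<forall>w\<in>W. \<phi> w \<in> side (\<sigma> w)"
    using inj_on_into_two_sides[of W S S' \<sigma> "{}"] H finite_sides disjoint classes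
    unfolding simple_graph_def side_def by auto
  have "\<phi> ` e \<in> E" if "e \<in> F" for e
  proof -
    obtain a b where "a \<in> W" "b \<in> W" "e = {a, b}"
      using H \<open>e \<in> F\<close> unfolding simple_graph_def by auto
    then show ?thesis
      using edge_iff_sides_differ[of "\<phi> a" "\<sigma> a" "\<phi> b" "\<sigma> b"] \<phi>(2) proper \<open>e \<in> F\<close> by simp
  qed
  moreover have "\<phi> ` W \<subseteq> V"
    using \<phi>(2) V_eq by (auto simp: side_def split: if_splits)
  ultimately show ?thesis
    using \<phi> unfolding graph_embedding_def by auto
qed

lemma apex_embedding_extending:
  fixes \<sigma> :: "'b \<Rightarrow> bool"
  assumes H: "simple_graph (W, F)"
    and classes: "card {w\<in>W - {x\<^sub>0}. \<sigma> w} \<le> card S" "card {w\<in>W - {x\<^sub>0}. \<not> \<sigma> w} \<le> card S'"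
    and proper: "\<And>a b. {a, b} \<in> F \<Longrightarrow> a \<noteq> x\<^sub>0 \<Longrightarrow> b \<noteq> x\<^sub>0 \<Longrightarrow> \<sigma> a \<noteq> \<sigma> b"
    and D: "D \<subseteq> W - {x\<^sub>0}" "inj_on f D" "\<forall>w\<in>D. f w \<in> side (\<sigma> w)"
    and apex_edges: "\<And>z. {x\<^sub>0, z} \<in> F \<Longrightarrow> z \<in> D \<and> {v, f z} \<in> E"
  shows "\<exists>\<phi>. graph_embedding (W, F) (V, E) \<phi> \<and> \<phi> x\<^sub>0 = v \<and>
           (\<forall>w\<in>W - {x\<^sub>0}. \<phi> w \<in> side (\<sigma> w)) \<and> (\<forall>w\<in>D. \<phi> w = f w)"
proof -
  have "finite (W - {x\<^sub>0})"
    using H unfolding simple_graph_def by simp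
  then obtain \<phi> where \<phi>: "inj_on \<phi> (W - {x\<^sub>0})" "\<forall>w\<in>W - {x\<^sub>0}. \<phi> w \<in> side (\<sigma> w)"
      "\<forall>w\<in>D. \<phi> w = f w"
    using inj_on_into_two_sides[of "W - {x\<^sub>0}" S S' \<sigma> D f] finite_sides disjoint classes D
    unfolding side_def by auto
  define \<psi> where "\<psi> = \<phi>(x\<^sub>0 := v)"
  have \<psi>_side: "\<psi> w \<in> side (\<sigma> w)" if "w \<in> W - {x\<^sub>0}" for w
    using \<phi>(2) that by (simp add: \<psi>_def)
  have "inj_on \<psi> (W - {x\<^sub>0})" "\<psi> x\<^sub>0 \<notin> \<psi> ` (W - {x\<^sub>0})"
    using \<phi>(1) \<psi>_side apex_notin_side by (auto simp: \<psi>_def inj_on_def)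
  then have "inj_on \<psi> (insert x\<^sub>0 (W - {x\<^sub>0}))"
    unfolding inj_on_insert by simp
  then have "inj_on \<psi> W"
    by (rule inj_on_subset) blast
  moreover have "\<psi> w \<in> V" if "w \<in> W" for w
    using \<psi>_side[of w] side_subset that V_eq by (cases "w = x\<^sub>0") (auto simp: \<psi>_def)
  moreover have "\<psi> ` e \<in> E" if "e \<in> F" for e
  proof -
    obtain a b where ab: "a \<in> W" "b \<in> W" "a \<noteq> b" "e = {a, b}"
      using H \<open>e \<in> F\<close> unfolding simple_graph_def by auto
    have apex_edge: "{v, \<psi> z} \<in> E" if "{x\<^sub>0, z} \<in> F" for z
      using apex_edges[OF that] D(1) \<phi>(3) by (auto simp: \<psi>_def)
    consider "a = x\<^sub>0" | "b = x\<^sub>0" | "a \<noteq> x\<^sub>0" "b \<noteq> x\<^sub>0"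
      by blast
    then show ?thesis
    proof cases
      case 1
      then show ?thesis
        using apex_edge[of b] ab \<open>e \<in> F\<close> by (simp add: \<psi>_def insert_commute)
    next
      case 2
      then show ?thesis
        using apex_edge[of a] ab \<open>e \<in> F\<close> by (simp add: \<psi>_def insert_commute)
    next
      case 3
      then show ?thesis
        using edge_iff_sides_differ[OF \<psi>_side \<psi>_side] proper \<open>e \<in> F\<close> ab by simp
    qed
  qed
  moreover have "\<psi> x\<^sub>0 = v" "\<forall>w\<in>D. \<psi> w = f w"
    using \<phi>(3) D(1) by (auto simp: \<psi>_def)
  ultimately show ?thesis
    using \<psi>_side unfolding graph_embedding_def by (intro exI[of _ \<psi>]) (simp add: image_subset_iff)
qed

lemma apex_embedding:
  fixes \<sigma> :: "'b \<Rightarrow> bool"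
  assumes H: "simple_graph (W, F)"
    and classes: "card {w\<in>W - {x\<^sub>0}. \<sigma> w} \<le> card S" "card {w\<in>W - {x\<^sub>0}. \<not> \<sigma> w} \<le> card S'"
    and proper: "\<And>a b. {a, b} \<in> F \<Longrightarrow> a \<noteq> x\<^sub>0 \<Longrightarrow> b \<noteq> x\<^sub>0 \<Longrightarrow> \<sigma> a \<noteq> \<sigma> b"
    and apex_edges: "\<And>z. {x\<^sub>0, z} \<in> F \<Longrightarrow> z = n\<^sub>1 \<or> z = n\<^sub>2"
    and n\<^sub>1: "n\<^sub>1 \<in> W" "n\<^sub>1 \<noteq> x\<^sub>0" "\<sigma> n\<^sub>1"
    and n\<^sub>2: "n\<^sub>2 \<noteq> x\<^sub>0" "n\<^sub>2 \<noteq> n\<^sub>1" "n\<^sub>2 \<in> W \<Longrightarrow> \<sigma> n\<^sub>2 \<longleftrightarrow> u\<^sub>2 \<in> S"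
      \<comment> \<open>\<open>n\<^sub>2 \<notin> W\<close> is allowed, for an apex with the single neighbour \<open>n\<^sub>1\<close>\<close>
    and u\<^sub>2: "{v, u\<^sub>2} \<in> E" "u\<^sub>2 \<noteq> u\<^sub>1"
    and y: "y \<in> W" "y \<notin> {x\<^sub>0, n\<^sub>1, n\<^sub>2}" "\<sigma> y"
  shows "\<exists>\<phi>. graph_embedding (W, F) (V, E) \<phi> \<and> \<phi> x\<^sub>0 = v \<and> \<phi> y = u\<^sub>0 \<and>
           (\<forall>w\<in>W - {x\<^sub>0}. \<phi> w \<in> side (\<sigma> w))"
proof -
  define D where "D = {n\<^sub>1, y} \<union> ({n\<^sub>2} \<inter> W)"
  define f where "f z = (if z = n\<^sub>1 then u\<^sub>1 else if z = n\<^sub>2 then u\<^sub>2 else u\<^sub>0)" for z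
  have "u\<^sub>2 \<in> side (\<sigma> n\<^sub>2)" if "n\<^sub>2 \<in> W"
    using neighbour_of_apex_in_sides[OF u\<^sub>2(1)] n\<^sub>2(3)[OF that] disjoint by (auto simp: side_def)
  then have f_side: "\<forall>w\<in>D. f w \<in> side (\<sigma> w)"
    using neighbour non_neighbour n\<^sub>1 n\<^sub>2 y unfolding D_def f_def side_def by auto
  have "u\<^sub>0 \<noteq> u\<^sub>1" "u\<^sub>0 \<noteq> u\<^sub>2"
    using neighbour non_neighbour u\<^sub>2 by auto
  then have "inj_on f D"
    using n\<^sub>2(2) y(2) u\<^sub>2(2) unfolding D_def f_def inj_on_def by auto
  moreover have "D \<subseteq> W - {x\<^sub>0}"
    using n\<^sub>1 n\<^sub>2 y unfolding D_def by auto
  moreover have "z \<in> D \<and> {v, f z} \<in> E" if "{x\<^sub>0, z} \<in> F" for z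
    using apex_edges[OF that] simple_graph_edge_subset[OF H, of "{x\<^sub>0, z}"] that
      neighbour(2) u\<^sub>2(1) n\<^sub>2(2)
    unfolding D_def f_def by auto
  ultimately obtain \<phi> where "graph_embedding (W, F) (V, E) \<phi>" "\<phi> x\<^sub>0 = v"
      "\<forall>w\<in>W - {x\<^sub>0}. \<phi> w \<in> side (\<sigma> w)" "\<forall>w\<in>D. \<phi> w = f w"
    using apex_embedding_extending[OF H classes proper _ _ f_side] by blast
  moreover have "f y = u\<^sub>0"
    using y(2) by (simp add: f_def)
  ultimately show ?thesis
    unfolding D_def by auto
qed

end

section \<open>The graphs \<open>X_graph p\<close> and \<open>Y_graph p\<close>\<close>

definition Kpp_apex_graph :: "nat \<Rightarrow> nat \<Rightarrow> nat \<Rightarrow> nat graph" where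
  "Kpp_apex_graph p n\<^sub>1 n\<^sub>2 = ({0..2 * p}, Kpp_edges p \<union> {{2 * p, n\<^sub>1}, {2 * p, n\<^sub>2}})"

lemma X_graph_eq: "X_graph p = Kpp_apex_graph p 0 1"
  by (simp add: X_graph_def Kpp_apex_graph_def)

lemma Y_graph_eq: "Y_graph p = Kpp_apex_graph p 0 p"
  by (simp add: Y_graph_def Kpp_apex_graph_def)

lemma Kpp_apex_graph_commute: "Kpp_apex_graph p n\<^sub>1 n\<^sub>2 = Kpp_apex_graph p n\<^sub>2 n\<^sub>1"
  by (simp add: Kpp_apex_graph_def insert_commute)

lemma Kpp_edge_iff:
  "{a, b} \<in> Kpp_edges p \<longleftrightarrow> a < p \<and> p \<le> b \<and> b < 2 * p \<or> b < p \<and> p \<le> a \<and> a < 2 * p"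
  unfolding Kpp_edges_def by (auto simp: doubleton_eq_iff)

lemma simple_graph_Kpp_apex_graph:
  assumes "n\<^sub>1 < 2 * p" "n\<^sub>2 < 2 * p"
  shows "simple_graph (Kpp_apex_graph p n\<^sub>1 n\<^sub>2)"
proof -
  have "\<exists>x y. x \<in> {0..2 * p} \<and> y \<in> {0..2 * p} \<and> x \<noteq> y \<and> e = {x, y}"
    if e: "e \<in> Kpp_edges p" for e
  proof -
    obtain a b where "e = {a, b}" "a < p" "p \<le> b" "b < 2 * p"
      using e unfolding Kpp_edges_def by blast
    then show ?thesis
      by (intro exI[of _ a] exI[of _ b]) auto
  qed
  moreover have "\<exists>x y. x \<in> {0..2 * p} \<and> y \<in> {0..2 * p} \<and> x \<noteq> y \<and> e = {x, y}"
    if "e \<in> {{2 * p, n\<^sub>1}, {2 * p, n\<^sub>2}}" for e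
    using that assms by (auto 0 3 intro: exI[of _ "2 * p"] exI[of _ n\<^sub>1] exI[of _ n\<^sub>2])
  ultimately show ?thesis
    unfolding simple_graph_def Kpp_apex_graph_def by auto
qed

lemma Kpp_apex_graph_apex_edge:
  "{2 * p, z} \<in> snd (Kpp_apex_graph p n\<^sub>1 n\<^sub>2) \<longleftrightarrow> z = n\<^sub>1 \<or> z = n\<^sub>2"
  unfolding Kpp_apex_graph_def by (auto simp: Kpp_edge_iff doubleton_eq_iff)

lemma intersects_to_Kpp_apex_graphI:
  assumes G: "simple_graph (V, E)" and n: "n\<^sub>1 < 2 * p" "n\<^sub>2 < 2 * p"
    and embeds: "\<exists>\<phi>. graph_embedding (Kpp_apex_graph p n\<^sub>1 n\<^sub>2) (V, E) \<phi>"
    and apex: "\<And>z. z < 2 * p \<Longrightarrow> z \<notin> {n\<^sub>1, n\<^sub>2} \<Longrightarrow>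
                 \<exists>\<phi>. graph_embedding (Kpp_apex_graph p n\<^sub>1 n\<^sub>2) (V, E) \<phi> \<and> {\<phi> (2 * p), \<phi> z} \<notin> E"
    and same_part: "\<And>a b. a < 2 * p \<Longrightarrow> b < 2 * p \<Longrightarrow> (a < p) = (b < p) \<Longrightarrow>
                 \<exists>\<phi>. graph_embedding (Kpp_apex_graph p n\<^sub>1 n\<^sub>2) (V, E) \<phi> \<and> {\<phi> a, \<phi> b} \<notin> E"
  shows "intersects_to (V, E) (Kpp_apex_graph p n\<^sub>1 n\<^sub>2)"
proof (rule intersects_to_if_nonedges_separated[OF G simple_graph_Kpp_apex_graph[OF n] embeds])
  fix a b assume ab: "a \<in> fst (Kpp_apex_graph p n\<^sub>1 n\<^sub>2)" "b \<in> fst (Kpp_apex_graph p n\<^sub>1 n\<^sub>2)" "a \<noteq> b"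
    and nonedge: "{a, b} \<notin> snd (Kpp_apex_graph p n\<^sub>1 n\<^sub>2)"
  have "a \<le> 2 * p" "b \<le> 2 * p"
    using ab by (simp_all add: Kpp_apex_graph_def)
  then consider "a = 2 * p" "b < 2 * p" | "b = 2 * p" "a < 2 * p" | "a < 2 * p" "b < 2 * p"
    using ab(3) by linarith
  then show "\<exists>\<phi>. graph_embedding (Kpp_apex_graph p n\<^sub>1 n\<^sub>2) (V, E) \<phi> \<and> {\<phi> a, \<phi> b} \<notin> snd (V, E)"
  proof cases
    case 1
    then have "b \<notin> {n\<^sub>1, n\<^sub>2}"
      using nonedge Kpp_apex_graph_apex_edge by blast
    then show ?thesis
      using apex[of b] 1 by simp
  next
    case 2
    have "{2 * p, a} = {a, b}"
      using 2(1) by blast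
    then have "{2 * p, a} \<notin> snd (Kpp_apex_graph p n\<^sub>1 n\<^sub>2)"
      using nonedge by simp
    then have "a \<notin> {n\<^sub>1, n\<^sub>2}"
      by (simp add: Kpp_apex_graph_apex_edge)
    then obtain \<phi> where "graph_embedding (Kpp_apex_graph p n\<^sub>1 n\<^sub>2) (V, E) \<phi>" "{\<phi> (2 * p), \<phi> a} \<notin> E"
      using apex[of a] 2(2) by blast
    moreover have "{\<phi> a, \<phi> b} = {\<phi> (2 * p), \<phi> a}"
      using 2(1) by blast
    ultimately show ?thesis
      by auto
  next
    case 3
    then have "{a, b} \<notin> Kpp_edges p"
      using nonedge by (simp add: Kpp_apex_graph_def)
    then have "(a < p) = (b < p)"
      using 3 by (auto simp: Kpp_edge_iff)
    then show ?thesis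
      using same_part 3 by simp
  qed
qed

context biclique_with_apex
begin

lemma Kpp_apex_embedding:
  assumes sizes: "p \<le> card S" "p \<le> card S'"
    and n: "n\<^sub>1 < 2 * p" "n\<^sub>2 < 2 * p" "n\<^sub>1 \<noteq> n\<^sub>2" "(n\<^sub>1 < p) = c" "((n\<^sub>2 < p) = c) = (u\<^sub>2 \<in> S)"
    and u\<^sub>2: "{v, u\<^sub>2} \<in> E" "u\<^sub>2 \<noteq> u\<^sub>1"
    and y: "y < 2 * p" "y \<notin> {n\<^sub>1, n\<^sub>2}" "(y < p) = c"
  shows "\<exists>\<phi>. graph_embedding (Kpp_apex_graph p n\<^sub>1 n\<^sub>2) (V, E) \<phi> \<and> \<phi> (2 * p) = v \<and> \<phi> y = u\<^sub>0 \<and>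
           (\<forall>z<2 * p. \<phi> z \<in> side ((z < p) = c))"
proof -
  define \<sigma> where "\<sigma> z = ((z < p) = c)" for z :: nat
  have "{w \<in> {0..2 * p} - {2 * p}. \<sigma> w} = (if c then {0..<p} else {p..<2 * p})"
    "{w \<in> {0..2 * p} - {2 * p}. \<not> \<sigma> w} = (if c then {p..<2 * p} else {0..<p})"
    by (auto simp: \<sigma>_def)
  then have classes: "card {w \<in> {0..2 * p} - {2 * p}. \<sigma> w} \<le> card S"
    "card {w \<in> {0..2 * p} - {2 * p}. \<not> \<sigma> w} \<le> card S'"
    using sizes by auto
  have proper: "\<sigma> a \<noteq> \<sigma> b"
    if "{a, b} \<in> Kpp_edges p \<union> {{2 * p, n\<^sub>1}, {2 * p, n\<^sub>2}}" "a \<noteq> 2 * p" "b \<noteq> 2 * p" for a b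
    using that by (auto simp: \<sigma>_def Kpp_edge_iff doubleton_eq_iff)
  have "\<exists>\<phi>. graph_embedding ({0..2 * p}, Kpp_edges p \<union> {{2 * p, n\<^sub>1}, {2 * p, n\<^sub>2}}) (V, E) \<phi> \<and>
      \<phi> (2 * p) = v \<and> \<phi> y = u\<^sub>0 \<and> (\<forall>w\<in>{0..2 * p} - {2 * p}. \<phi> w \<in> side (\<sigma> w))"
    by (rule apex_embedding[OF _ classes proper _ _ _ _ _ _ _ u\<^sub>2])
      (use n y simple_graph_Kpp_apex_graph[OF n(1,2)] Kpp_apex_graph_apex_edge[of p _ n\<^sub>1 n\<^sub>2]
        in \<open>auto simp: \<sigma>_def Kpp_apex_graph_def\<close>)
  then show ?thesis
    unfolding Kpp_apex_graph_def \<sigma>_def by auto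
qed

lemma intersects_to_X_graph:
  assumes sizes: "3 \<le> p" "p \<le> card S" "p \<le> card S'"
    and u\<^sub>2: "{v, u\<^sub>2} \<in> E" "u\<^sub>2 \<noteq> u\<^sub>1" "u\<^sub>2 \<in> S"
    and no_neighbour_in_S': "\<forall>x\<in>S'. {v, x} \<notin> E"
  shows "intersects_to (V, E) (X_graph p)"
proof -
  have emb: "\<exists>\<phi>. graph_embedding (Kpp_apex_graph p 0 1) (V, E) \<phi> \<and> \<phi> (2 * p) = v \<and> \<phi> y = u\<^sub>0 \<and>
      (\<forall>z<2 * p. \<phi> z \<in> side (z < p))" if "2 \<le> y" "y < p" for y
    using Kpp_apex_embedding[of p 0 1 True u\<^sub>2 y] sizes u\<^sub>2 that by simp
  then obtain \<phi>\<^sub>2 where \<phi>\<^sub>2: "graph_embedding (Kpp_apex_graph p 0 1) (V, E) \<phi>\<^sub>2" "\<phi>\<^sub>2 (2 * p) = v"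
    "\<forall>z<2 * p. \<phi>\<^sub>2 z \<in> side (z < p)"
    using sizes(1) by fastforce
  show ?thesis
    unfolding X_graph_eq
  proof (rule intersects_to_Kpp_apex_graphI[OF simple])
    fix z assume z: "z < 2 * p" "z \<notin> {0, 1}"
    show "\<exists>\<phi>. graph_embedding (Kpp_apex_graph p 0 1) (V, E) \<phi> \<and> {\<phi> (2 * p), \<phi> z} \<notin> E"
    proof (cases "z < p")
      case True
      then show ?thesis
        using emb[of z] z non_neighbour by auto
    next
      case False
      then have "\<phi>\<^sub>2 z \<in> S'"
        using \<phi>\<^sub>2(3) z(1) by (auto simp: side_def)
      then show ?thesis
        using \<phi>\<^sub>2(1,2) no_neighbour_in_S' by auto
    qed
  next
    fix a b assume "a < 2 * p" "b < 2 * p" "(a < p) = (b < p)"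
    then have "{\<phi>\<^sub>2 a, \<phi>\<^sub>2 b} \<notin> E"
      using \<phi>\<^sub>2(3) edge_iff_sides_differ by metis
    then show "\<exists>\<phi>. graph_embedding (Kpp_apex_graph p 0 1) (V, E) \<phi> \<and> {\<phi> a, \<phi> b} \<notin> E"
      using \<phi>\<^sub>2(1) by blast
  qed (use \<phi>\<^sub>2(1) sizes in auto)
qed

lemma intersects_to_Y_graph:
  assumes sizes: "3 \<le> p" "p \<le> card S" "p \<le> card S'"
    and u\<^sub>2: "{v, u\<^sub>2} \<in> E" "u\<^sub>2 \<noteq> u\<^sub>1" "u\<^sub>2 \<in> S'"
  shows "intersects_to (V, E) (Y_graph p)"
proof -
  have "u\<^sub>2 \<notin> S"
    using u\<^sub>2(3) disjoint by blast
  then have emb: "\<exists>\<phi>. graph_embedding (Kpp_apex_graph p 0 p) (V, E) \<phi> \<and> \<phi> (2 * p) = v \<and> \<phi> y = u\<^sub>0 \<and>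
      (\<forall>z<2 * p. \<phi> z \<in> side ((z < p) = (y < p)))" if "y < 2 * p" "y \<notin> {0, p}" for y
    using Kpp_apex_embedding[of p 0 p True u\<^sub>2 y] Kpp_apex_embedding[of p p 0 False u\<^sub>2 y]
      Kpp_apex_graph_commute[of p p 0] sizes u\<^sub>2 that by (cases "y < p") auto
  then obtain \<phi>\<^sub>1 where \<phi>\<^sub>1: "graph_embedding (Kpp_apex_graph p 0 p) (V, E) \<phi>\<^sub>1"
    "\<forall>z<2 * p. \<phi>\<^sub>1 z \<in> side (z < p)"
    using emb[of 1] sizes(1) by auto
  show ?thesis
    unfolding Y_graph_eq
  proof (rule intersects_to_Kpp_apex_graphI[OF simple])
    fix z assume "z < 2 * p" "z \<notin> {0, p}"
    then show "\<exists>\<phi>. graph_embedding (Kpp_apex_graph p 0 p) (V, E) \<phi> \<and> {\<phi> (2 * p), \<phi> z} \<notin> E"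
      using emb[of z] non_neighbour by auto
  next
    fix a b assume "a < 2 * p" "b < 2 * p" "(a < p) = (b < p)"
    then have "{\<phi>\<^sub>1 a, \<phi>\<^sub>1 b} \<notin> E"
      using \<phi>\<^sub>1(2) edge_iff_sides_differ by metis
    then show "\<exists>\<phi>. graph_embedding (Kpp_apex_graph p 0 p) (V, E) \<phi> \<and> {\<phi> a, \<phi> b} \<notin> E"
      using \<phi>\<^sub>1(1) by blast
  qed (use \<phi>\<^sub>1(1) sizes in auto)
qed

end

section \<open>The forest \<open>tS_graph t\<close>\<close>

fun tS_parent :: "nat \<Rightarrow> nat \<times> nat \<times> nat \<Rightarrow> nat \<times> nat \<times> nat \<Rightarrow> bool" where
  "tS_parent t (i, j, k) (i', j', k') \<longleftrightarrow> i' = i \<and> i < t \<and> 1 \<le> j' \<and> j' \<le> 3 \<and>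
     ((j = 0 \<and> k = 0 \<and> k' = 1) \<or> (j' = j \<and> 1 \<le> k \<and> k < t \<and> k' = Suc k))"

definition tS_depth :: "nat \<times> nat \<times> nat \<Rightarrow> nat" where
  "tS_depth z = snd (snd z)"

lemma tS_vertex_iff:
  "(i, j, k) \<in> fst (tS_graph t) \<longleftrightarrow> i < t \<and> (j = 0 \<and> k = 0 \<or> 1 \<le> j \<and> j \<le> 3 \<and> 1 \<le> k \<and> k \<le> t)"
  unfolding tS_graph_def by auto

lemma tS_edge_iff: "e \<in> snd (tS_graph t) \<longleftrightarrow> (\<exists>z z'. e = {z, z'} \<and> tS_parent t z z')"
proof
  assume "e \<in> snd (tS_graph t)"
  then consider i j where "e = {(i, 0, 0), (i, j, 1)}" "i < t" "1 \<le> j" "j \<le> 3"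
    | i j k where "e = {(i, j, k), (i, j, Suc k)}" "i < t" "1 \<le> j" "j \<le> 3" "1 \<le> k" "k < t"
    unfolding tS_graph_def by auto
  then show "\<exists>z z'. e = {z, z'} \<and> tS_parent t z z'"
  proof cases
    case (1 i j)
    then show ?thesis
      by (intro exI[of _ "(i, 0, 0)"] exI[of _ "(i, j, 1)"]) simp
  next
    case (2 i j k)
    then show ?thesis
      by (intro exI[of _ "(i, j, k)"] exI[of _ "(i, j, Suc k)"]) simp
  qed
next
  assume "\<exists>z z'. e = {z, z'} \<and> tS_parent t z z'"
  then obtain i j k i' j' k' where e: "e = {(i, j, k), (i', j', k')}"
    and parent: "tS_parent t (i, j, k) (i', j', k')"
    by (metis prod_cases3)
  from parent consider "i' = i" "i < t" "1 \<le> j'" "j' \<le> 3" "j = 0" "k = 0" "k' = 1"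
    | "i' = i" "i < t" "1 \<le> j'" "j' \<le> 3" "j' = j" "1 \<le> k" "k < t" "k' = Suc k"
    by auto
  then show "e \<in> snd (tS_graph t)"
  proof cases
    case 1
    then have "e \<in> {{(i, 0, 0), (i, j, 1)} | i j. i < t \<and> 1 \<le> j \<and> j \<le> 3}"
      using e by blast
    then show ?thesis
      unfolding tS_graph_def by simp
  next
    case 2
    then have "e \<in> {{(i, j, k), (i, j, Suc k)} | i j k. i < t \<and> 1 \<le> j \<and> j \<le> 3 \<and> 1 \<le> k \<and> k < t}"
      using e by blast
    then show ?thesis
      unfolding tS_graph_def by simp
  qed
qed

lemma tS_edge_doubleton_iff: "{a, b} \<in> snd (tS_graph t) \<longleftrightarrow> tS_parent t a b \<or> tS_parent t b a"
  unfolding tS_edge_iff doubleton_eq_iff by blast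

lemma tS_parent_vertices:
  "tS_parent t z z' \<Longrightarrow> z \<in> fst (tS_graph t) \<and> z' \<in> fst (tS_graph t)"
  by (cases z; cases z') (auto simp: tS_vertex_iff)

lemma tS_parent_depth: "tS_parent t z z' \<Longrightarrow> tS_depth z' = Suc (tS_depth z)"
  by (cases z; cases z') (auto simp: tS_depth_def)

lemma tS_edge_parity: "{a, b} \<in> snd (tS_graph t) \<Longrightarrow> even (tS_depth a) \<noteq> even (tS_depth b)"
proof -
  assume "{a, b} \<in> snd (tS_graph t)"
  then have "tS_parent t a b \<or> tS_parent t b a"
    using tS_edge_doubleton_iff by blast
  then have "tS_depth b = Suc (tS_depth a) \<or> tS_depth a = Suc (tS_depth b)"
    using tS_parent_depth by blast
  then show ?thesis
    by auto
qed

lemma tS_vertices_subset: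
  "fst (tS_graph t) \<subseteq> (\<lambda>i. (i, 0, 0)) ` {..<t} \<union> {..<t} \<times> {1..3} \<times> {1..t}"
proof
  fix z assume "z \<in> fst (tS_graph t)"
  then show "z \<in> (\<lambda>i. (i, 0, 0)) ` {..<t} \<union> {..<t} \<times> {1..3} \<times> {1..t}"
    by (cases z) (auto simp: tS_vertex_iff)
qed

lemma simple_graph_tS_graph: "simple_graph (tS_graph t)"
proof -
  have "finite (fst (tS_graph t))"
    using tS_vertices_subset by (rule finite_subset) simp
  moreover have "\<exists>z z'. z \<in> fst (tS_graph t) \<and> z' \<in> fst (tS_graph t) \<and> z \<noteq> z' \<and> e = {z, z'}"
    if e: "e \<in> snd (tS_graph t)" for e
  proof -
    obtain z z' where "e = {z, z'}" "tS_parent t z z'"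
      using tS_edge_iff[THEN iffD1, OF e] by blast
    moreover have "z \<noteq> z'"
      using tS_parent_depth[OF \<open>tS_parent t z z'\<close>] by auto
    ultimately show ?thesis
      using tS_parent_vertices by blast
  qed
  ultimately show ?thesis
    unfolding simple_graph_def by simp
qed

lemma card_tS_vertices: "card (fst (tS_graph t)) \<le> 3 * t\<^sup>2 + t"
proof -
  have "card (fst (tS_graph t)) \<le> card ((\<lambda>i. (i, 0::nat, 0::nat)) ` {..<t} \<union> {..<t} \<times> {1..3::nat} \<times> {1..t})"
    using tS_vertices_subset by (rule card_mono[rotated]) simp
  also have "\<dots> \<le> card ((\<lambda>i. (i, 0::nat, 0::nat)) ` {..<t}) + card ({..<t} \<times> {1..3::nat} \<times> {1..t})"
    by (rule card_Un_le)
  also have "\<dots> \<le> t + t * (3 * t)"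
    using card_image_le[of "{..<t}" "\<lambda>i. (i, 0::nat, 0::nat)"] by (simp add: card_cartesian_product)
  finally show ?thesis
    by (simp add: power2_eq_square)
qed

fun tS_pred :: "nat \<times> nat \<times> nat \<Rightarrow> nat \<times> nat \<times> nat" where
  "tS_pred (i, j, k) = (if k = 1 then (i, 0, 0) else (i, j, k - 1))"

fun tS_succ :: "nat \<times> nat \<times> nat \<Rightarrow> nat \<times> nat \<times> nat" where
  "tS_succ (i, j, k) = (i, j, Suc k)"

fun tS_below :: "nat \<times> nat \<times> nat \<Rightarrow> nat \<times> nat \<times> nat \<Rightarrow> bool" where
  "tS_below (i, j, k) (i', j', k') \<longleftrightarrow> i' = i \<and> j' = j \<and> k < k'"

lemma tS_neighbours_of_leg_vertex:
  assumes "(i, j, k) \<in> fst (tS_graph t)" "1 \<le> k"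
  shows "{(i, j, k), z} \<in> snd (tS_graph t) \<longleftrightarrow> z = tS_pred (i, j, k) \<or> z = tS_succ (i, j, k) \<and> k < t"
  using assms unfolding tS_edge_doubleton_iff by (cases z) (auto simp: tS_vertex_iff)

lemma tS_pred_in_vertices:
  assumes "(i, j, k) \<in> fst (tS_graph t)" "1 \<le> k"
  shows "tS_pred (i, j, k) \<in> fst (tS_graph t)"
  using assms by (auto simp: tS_vertex_iff)

lemma tS_succ_in_vertices_iff:
  assumes "(i, j, k) \<in> fst (tS_graph t)" "1 \<le> k"
  shows "tS_succ (i, j, k) \<in> fst (tS_graph t) \<longleftrightarrow> k < t"
  using assms by (auto simp: tS_vertex_iff)

lemma tS_edge_below_iff:
  assumes "1 \<le> k" "{a, b} \<in> snd (tS_graph t)" "a \<noteq> (i, j, k)" "b \<noteq> (i, j, k)"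
  shows "tS_below (i, j, k) a \<longleftrightarrow> tS_below (i, j, k) b"
proof -
  have "tS_parent t a b \<or> tS_parent t b a"
    using tS_edge_doubleton_iff[THEN iffD1, OF assms(2)] .
  then show ?thesis
    using assms(1,3,4) by (cases a; cases b) auto
qed

lemma card_tS_subset: "A \<subseteq> fst (tS_graph t) \<Longrightarrow> card A \<le> 3 * t\<^sup>2 + t"
proof -
  assume A: "A \<subseteq> fst (tS_graph t)"
  have "finite (fst (tS_graph t))"
    using simple_graph_tS_graph unfolding simple_graph_def by simp
  then show ?thesis
    using card_mono[OF _ A] card_tS_vertices[of t] by linarith
qed

context biclique_with_apex
begin

lemma tS_parity_embedding:
  assumes sizes: "3 * t\<^sup>2 + t + 1 \<le> p" "p \<le> card S" "p \<le> card S'"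
  shows "\<exists>\<phi>. graph_embedding (tS_graph t) (V, E) \<phi> \<and>
           (\<forall>w\<in>fst (tS_graph t). \<phi> w \<in> side (even (tS_depth w)))"
proof -
  have small: "card {w \<in> fst (tS_graph t). P w} \<le> p" for P
    using card_tS_subset[of "{w \<in> fst (tS_graph t). P w}" t] sizes(1) by auto
  have classes: "card {w \<in> fst (tS_graph t). even (tS_depth w)} \<le> card S"
    "card {w \<in> fst (tS_graph t). \<not> even (tS_depth w)} \<le> card S'"
    using small[of "\<lambda>w. even (tS_depth w)"] small[of "\<lambda>w. \<not> even (tS_depth w)"] sizes(2,3) by linarith+
  have "simple_graph (fst (tS_graph t), snd (tS_graph t))"
    using simple_graph_tS_graph by simp
  from bipartite_embedding[OF this classes tS_edge_parity] show ?thesis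
    by simp
qed

lemma tS_nonedge_same_parity:
  assumes sizes: "3 * t\<^sup>2 + t + 1 \<le> p" "p \<le> card S" "p \<le> card S'"
    and ab: "a \<in> fst (tS_graph t)" "b \<in> fst (tS_graph t)" "even (tS_depth a) = even (tS_depth b)"
  shows "\<exists>\<phi>. graph_embedding (tS_graph t) (V, E) \<phi> \<and> {\<phi> a, \<phi> b} \<notin> E"
proof -
  obtain \<phi> where \<phi>: "graph_embedding (tS_graph t) (V, E) \<phi>"
    "\<forall>w\<in>fst (tS_graph t). \<phi> w \<in> side (even (tS_depth w))"
    using tS_parity_embedding[OF sizes] by blast
  then have "\<phi> a \<in> side (even (tS_depth a))" "\<phi> b \<in> side (even (tS_depth a))"
    using ab by auto
  then have "{\<phi> a, \<phi> b} \<notin> E"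
    using edge_iff_sides_differ by simp
  with \<phi>(1) show ?thesis
    by blast
qed

lemma tS_nonedge_at_leg_vertex:
  assumes sizes: "3 * t\<^sup>2 + t + 1 \<le> p" "p \<le> card S" "p \<le> card S'"
    and u\<^sub>2: "{v, u\<^sub>2} \<in> E" "u\<^sub>2 \<noteq> u\<^sub>1"
    and x: "(i, j, k) \<in> fst (tS_graph t)" "1 \<le> k"
    and y: "y \<in> fst (tS_graph t)" "y \<noteq> (i, j, k)" "{(i, j, k), y} \<notin> snd (tS_graph t)"
      "even (tS_depth y) \<noteq> even k"
  shows "\<exists>\<phi>. graph_embedding (tS_graph t) (V, E) \<phi> \<and> {\<phi> (i, j, k), \<phi> y} \<notin> E"
proof -
  let ?x = "(i, j, k)" and ?W = "fst (tS_graph t)" and ?F = "snd (tS_graph t)"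
  let ?below = "tS_below ?x"
  define n\<^sub>1 where "n\<^sub>1 = (if ?below y then tS_succ ?x else tS_pred ?x)"
  define n\<^sub>2 where "n\<^sub>2 = (if ?below y then tS_pred ?x else tS_succ ?x)"
  (* Edges avoiding x never join a vertex below x to one that is not, so flipping the parity
     colouring on the piece not containing y keeps it proper and moves n2 to the side of u2. *)
  define \<sigma> where
    "\<sigma> z = ((even (tS_depth z) = even (tS_depth y)) \<noteq> (u\<^sub>2 \<in> S' \<and> ?below z \<noteq> ?below y))" for z
  have small: "card {w \<in> ?W - {?x}. P w} \<le> p" for P
    using card_tS_subset[of "{w \<in> ?W - {?x}. P w}" t] sizes(1) by auto
  have classes: "card {w \<in> ?W - {?x}. \<sigma> w} \<le> card S" "card {w \<in> ?W - {?x}. \<not> \<sigma> w} \<le> card S'"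
    using small[of \<sigma>] small[of "\<lambda>w. \<not> \<sigma> w"] sizes(2,3) by linarith+
  have proper: "\<sigma> a \<noteq> \<sigma> b" if "{a, b} \<in> ?F" "a \<noteq> ?x" "b \<noteq> ?x" for a b
    using tS_edge_parity[OF that(1)] tS_edge_below_iff[OF x(2) that] unfolding \<sigma>_def by auto
  have apex_edges: "z = n\<^sub>1 \<or> z = n\<^sub>2" if "{?x, z} \<in> ?F" for z
    using that tS_neighbours_of_leg_vertex[OF x] unfolding n\<^sub>1_def n\<^sub>2_def by auto
  have below_y: "k < t" if "?below y"
    using that y(1) by (cases y) (auto simp: tS_vertex_iff)
  have n\<^sub>1_in: "n\<^sub>1 \<in> ?W"
    using tS_pred_in_vertices[OF x] tS_succ_in_vertices_iff[OF x] below_y unfolding n\<^sub>1_def by auto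
  have n_below: "?below n\<^sub>1 = ?below y" "?below n\<^sub>2 \<noteq> ?below y"
    using x(2) unfolding n\<^sub>1_def n\<^sub>2_def by auto
  have n_parity: "even (tS_depth n\<^sub>1) = even (tS_depth y)" "even (tS_depth n\<^sub>2) = even (tS_depth y)"
    using x(2) y(4) unfolding n\<^sub>1_def n\<^sub>2_def by (auto simp: tS_depth_def)
  have n_ne: "n\<^sub>1 \<noteq> ?x" "n\<^sub>2 \<noteq> ?x" "n\<^sub>2 \<noteq> n\<^sub>1"
    using n_parity y(4) x(2) unfolding n\<^sub>1_def n\<^sub>2_def by (auto simp: tS_depth_def)
  have "y \<noteq> tS_pred ?x" "k < t \<Longrightarrow> y \<noteq> tS_succ ?x"
    using y(3) tS_neighbours_of_leg_vertex[OF x] by auto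
  then have y_ne: "y \<notin> {?x, n\<^sub>1, n\<^sub>2}"
    using y(2) below_y n_below unfolding n\<^sub>1_def n\<^sub>2_def by auto
  have "u\<^sub>2 \<in> S \<union> S'"
    using neighbour_of_apex_in_sides[OF u\<^sub>2(1)] .
  then have \<sigma>_n\<^sub>2: "\<sigma> n\<^sub>2 \<longleftrightarrow> u\<^sub>2 \<in> S"
    using n_below(2) n_parity(2) disjoint unfolding \<sigma>_def by auto
  have "simple_graph (?W, ?F)"
    using simple_graph_tS_graph by simp
  from apex_embedding[OF this classes proper apex_edges n\<^sub>1_in n_ne(1) _ n_ne(2,3) \<sigma>_n\<^sub>2 u\<^sub>2 y(1) y_ne]
  obtain \<phi> where "graph_embedding (?W, ?F) (V, E) \<phi>" "\<phi> ?x = v" "\<phi> y = u\<^sub>0"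
    using n_below(1) n_parity(1) unfolding \<sigma>_def by auto
  then show ?thesis
    using non_neighbour(2) by auto
qed


lemma intersects_to_tS_graph:
  assumes sizes: "3 * t\<^sup>2 + t + 1 \<le> p" "p \<le> card S" "p \<le> card S'"
    and u\<^sub>2: "{v, u\<^sub>2} \<in> E" "u\<^sub>2 \<noteq> u\<^sub>1"
  shows "intersects_to (V, E) (tS_graph t)"
proof (rule intersects_to_if_nonedges_separated[OF simple simple_graph_tS_graph])
  show "\<exists>\<phi>. graph_embedding (tS_graph t) (V, E) \<phi>"
    using tS_parity_embedding[OF sizes] by blast
next
  fix a b assume ab: "a \<in> fst (tS_graph t)" "b \<in> fst (tS_graph t)" "a \<noteq> b"
    "{a, b} \<notin> snd (tS_graph t)"
  have leg: "\<exists>\<phi>. graph_embedding (tS_graph t) (V, E) \<phi> \<and> {\<phi> x, \<phi> y} \<notin> E"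
    if "x \<in> fst (tS_graph t)" "y \<in> fst (tS_graph t)" "x \<noteq> y" "{x, y} \<notin> snd (tS_graph t)"
      "even (tS_depth x) \<noteq> even (tS_depth y)" "1 \<le> tS_depth x" for x y
    using tS_nonedge_at_leg_vertex[OF sizes u\<^sub>2, of "fst x" "fst (snd x)" "snd (snd x)" y] that
    by (auto simp: tS_depth_def)
  show "\<exists>\<phi>. graph_embedding (tS_graph t) (V, E) \<phi> \<and> {\<phi> a, \<phi> b} \<notin> snd (V, E)"
  proof (cases "even (tS_depth a) = even (tS_depth b)")
    case True
    then show ?thesis
      using tS_nonedge_same_parity[OF sizes ab(1,2)] by simp
  next
    case False
    then have "tS_depth a \<noteq> 0 \<or> tS_depth b \<noteq> 0"
      by auto
    then consider "1 \<le> tS_depth a" | "1 \<le> tS_depth b"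
      by linarith
    then show ?thesis
    proof cases
      case 1
      then show ?thesis
        using leg[OF ab] False by simp
    next
      case 2
      have "{b, a} \<notin> snd (tS_graph t)" "{\<phi> b, \<phi> a} = {\<phi> a, \<phi> b}" for \<phi> :: "_ \<Rightarrow> 'a"
        using ab(4) by (simp_all add: insert_commute)
      then show ?thesis
        using leg[OF ab(2,1) _ _ _ 2] ab(3) False by auto
    qed
  qed
qed

lemma intersects_to_X_or_Y_and_tS_graphs:
  assumes sizes: "3 \<le> p" "p \<le> card S" "p \<le> card S'"
    and u\<^sub>2: "{v, u\<^sub>2} \<in> E" "u\<^sub>2 \<noteq> u\<^sub>1"
  shows "(intersects_to (V, E) (X_graph p) \<or> intersects_to (V, E) (Y_graph p)) \<and>
         (\<forall>t. 3 * t\<^sup>2 + t + 1 \<le> p \<longrightarrow> intersects_to (V, E) (tS_graph t))"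
proof
  show "intersects_to (V, E) (X_graph p) \<or> intersects_to (V, E) (Y_graph p)"
  proof (cases "\<exists>w\<in>S'. {v, w} \<in> E")
    case True
    then obtain w where "w \<in> S'" "{v, w} \<in> E" "w \<noteq> u\<^sub>1"
      using neighbour(1) disjoint by blast
    then show ?thesis
      using intersects_to_Y_graph[OF sizes] by blast
  next
    case False
    then have "u\<^sub>2 \<in> S"
      using neighbour_of_apex_in_sides[OF u\<^sub>2(1)] u\<^sub>2(1) by blast
    then show ?thesis
      using intersects_to_X_graph[OF sizes u\<^sub>2] False by blast
  qed
  show "\<forall>t. 3 * t\<^sup>2 + t + 1 \<le> p \<longrightarrow> intersects_to (V, E) (tS_graph t)"
    using intersects_to_tS_graph sizes(2,3) u\<^sub>2 by blast
qed

end

theorem mainTheorem7: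
  fixes V :: "'a set" and E :: "'a set set" and A B :: "'a set" and v :: 'a and p :: nat
  assumes "p \<ge> 3"
    and "simple_graph (V, E)"
    and "V = A \<union> B \<union> {v}"
    and "A \<inter> B = {}" and "v \<notin> A" and "v \<notin> B"
    and "\<forall>x\<in>A. \<forall>y\<in>A. {x, y} \<notin> E"
    and "\<forall>x\<in>B. \<forall>y\<in>B. {x, y} \<notin> E"
    and "\<forall>x\<in>A. \<forall>y\<in>B. {x, y} \<in> E"
    and "card A \<ge> p" and "card B \<ge> p"
    and "card {x \<in> A \<union> B. {v, x} \<in> E} \<ge> 2"
    and "((\<exists>x\<in>A. {v, x} \<in> E) \<and> (\<exists>x\<in>A. {v, x} \<notin> E)) \<or>
         ((\<exists>x\<in>B. {v, x} \<in> E) \<and> (\<exists>x\<in>B. {v, x} \<notin> E))"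
  shows "(intersects_to (V, E) (X_graph p) \<or> intersects_to (V, E) (Y_graph p)) \<and>
         (\<forall>t::nat. p \<ge> 3 * t^2 + t + 1 \<longrightarrow> intersects_to (V, E) (tS_graph t))"
proof -
  from assms(13) obtain S S' u\<^sub>0 u\<^sub>1 where sides: "S = A \<and> S' = B \<or> S = B \<and> S' = A"
    and "u\<^sub>1 \<in> S" "{v, u\<^sub>1} \<in> E" "u\<^sub>0 \<in> S" "{v, u\<^sub>0} \<notin> E"
    by blast
  moreover have "\<forall>x\<in>B. \<forall>y\<in>A. {x, y} \<in> E"
    using assms(9) by (metis insert_commute)
  ultimately have host: "biclique_with_apex V E S S' v u\<^sub>0 u\<^sub>1"
    using assms(2-9) unfolding biclique_with_apex_def by auto
  have "p \<le> card S" "p \<le> card S'"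
    using sides assms(10,11) by auto
  moreover obtain u\<^sub>2 where "{v, u\<^sub>2} \<in> E" "u\<^sub>2 \<noteq> u\<^sub>1"
  proof -
    have "\<not> {x \<in> A \<union> B. {v, x} \<in> E} \<subseteq> {u\<^sub>1}"
      using card_mono[of "{u\<^sub>1}" "{x \<in> A \<union> B. {v, x} \<in> E}"] assms(12) by auto
    then show ?thesis
      using that by blast
  qed
  ultimately show ?thesis
    using biclique_with_apex.intersects_to_X_or_Y_and_tS_graphs[OF host] assms(1) by blast
qed

end
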